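(* Let $T\ge 1$, let $V_1,W_1,\dots,V_T,W_T$ be finite-dimensional quantum systems, $\tilde V := W_T\otimes V_T\otimes\cdots\otimes W_1\otimes V_1$, let $M\ge 1$, let $\mathcal{E}_1,\dots,\mathcal{E}_M\in\mathsf{Comb}_{W_T,V_T,\dots,W_1,V_1}$ and let $(p_1,\dots,p_M)$ be a probability vector. Let $\mathcal{P}$ be a nonempty subset of $\mathcal{P}_{\mathrm G}$. Let $\mathcal{C}$ be any closed convex cone and $\mathcal{S}$ any closed convex set such that $\mathcal{C}\subseteq \mathcal{C}_{\mathrm G}$, $\mathcal{S}\subseteq\mathcal{S}_{\mathrm G}$ and $$\overline{\mathrm{co}}\,\mathcal{P}=\Big\{\Phi\in\mathcal{C}:\ \textstyle\sum_{m=1}^M\Phi_m\in\mathcal{S}\Big\}.$$ Then $$\sup_{\Phi\in\mathcal{P}} P(\Phi)\;=\;\inf_{\chi\in\mathcal{D}_{\mathcal{C}}} D_{\mathcal{S}}(\chi),$$ i.e. the optimal values of Problem (P) and Problem (D) coincide.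
   Context: Notation: for a finite-dimensional system $X$, $\mathsf{Her}_X$, $\mathsf{Pos}_X$, $\mathsf{Den}_X$ are the Hermitian, positive semidefinite and density matrices on $X$, $I_X$ the identity, $\mathrm{Tr}_X$ the partial trace. On $\mathsf{Her}_{\tilde V}$ use $\langle A,B\rangle:=\mathrm{Tr}(AB)$. $\mathsf{Comb}_{W_T,V_T,\dots,W_1,V_1}$ is the set of $\tau\in\mathsf{Pos}_{\tilde V}$ for which there exist $\tau^{(t)}\in\mathsf{Pos}_{W_t\otimes V_t\otimes\cdots\otimes W_1\otimes V_1}$ ($1\le t\le T-1$) with $\mathrm{Tr}_{W_t}\tau^{(t)}=I_{V_t}\otimes\tau^{(t-1)}$ for all $1\le t\le T$, where $\tau^{(0)}:=1$, $\tau^{(T)}:=\tau$. $\mathsf{Comb}^*_{W_T,V_T,\dots,W_1,V_1}$ is the set of $\tau\in\mathsf{Pos}_{\tilde V}$ for which there exist $\tau^{(1)}\in\mathsf{Den}_{V_1}$ and $\tau^{(t)}\in\mathsf{Pos}_{V_t\otimes W_{t-1}\otimes V_{t-1}\otimes\cdots\otimes W_1\otimes V_1}$ ($2\le t\le T$) with $\tau=I_{W_T}\otimes\tau^{(T)}$ and $\mathrm{Tr}_{V_t}\tau^{(t)}=I_{W_{t-1}}\otimes\tau^{(t-1)}$ for $2\le t\le T$. Set $\mathcal{C}_{\mathrm G}:=\mathsf{Pos}_{\tilde V}^M$, $\mathcal{S}_{\mathrm G}:=\mathsf{Comb}^*_{W_T,V_T,\dots,W_1,V_1}$, and $\mathcal{P}_{\mathrm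 G}:=\{\Phi=(\Phi_1,\dots,\Phi_M)\in\mathcal{C}_{\mathrm G}:\sum_m\Phi_m\in\mathcal{S}_{\mathrm G}\}$ (the set of all testers). Elements $\Phi$ are viewed as vectors of the real space $\mathsf{Her}_{\tilde V}^M$; $\overline{\mathrm{co}}$ denotes the closure of the convex hull there. $P(\Phi):=\sum_{m=1}^M p_m\langle\Phi_m,\mathcal{E}_m\rangle$; Problem (P) is $\sup_{\Phi\in\mathcal{P}}P(\Phi)$. $\mathcal{D}_{\mathcal{C}}:=\{\chi\in\mathsf{Her}_{\tilde V}:\sum_{m=1}^M\langle\Phi_m,\chi-p_m\mathcal{E}_m\rangle\ge 0\ \ \forall\Phi\in\mathcal{C}\}$, $D_{\mathcal{S}}(\chi):=\max_{\varphi\in\mathcal{S}}\langle\varphi,\chi\rangle$, and Problem (D) is $\inf_{\chi\in\mathcal{D}_{\mathcal{C}}}D_{\mathcal{S}}(\chi)$. *)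

theory Defs
  imports "HOL-Analysis.Analysis" "HOL-Library.Function_Algebras"
begin

instantiation "fun" :: (type, real_vector) real_vector
begin
definition scaleR_fun :: "real \<Rightarrow> ('a \<Rightarrow> 'b) \<Rightarrow> 'a \<Rightarrow> 'b"
  where "scaleR_fun r f = (\<lambda>x. r *\<^sub>R f x)"
instance
  by standard (auto simp: scaleR_fun_def fun_eq_iff algebra_simps)
end

text \<open>Systems V_1, W_1, ..., V_T, W_T have dimensions dV t, dW t.
  A basis index of a product of some of these factors is a pair (w, v) of
  functions nat to nat: w k is the index in factor W_k and v k the index in factor
  V_k; coordinates of factors not present are fixed to 0.  An operator on such a
  product system is a matrix indexed by these indices, i.e. a function
  idx to idx to complex, required to vanish outside the index set.\<close>

type_synonym idx = "(nat \<Rightarrow> nat) \<times> (nat \<Rightarrow> nat)"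
type_synonym op = "idx \<Rightarrow> idx \<Rightarrow> complex"

text \<open>Basis index set of the tensor product of the factors W_k (k in Kw) and V_k (k in Kv).\<close>
definition IxS :: "(nat \<Rightarrow> nat) \<Rightarrow> (nat \<Rightarrow> nat) \<Rightarrow> nat set \<Rightarrow> nat set \<Rightarrow> idx set" where
  "IxS dW dV Kw Kv = {(w, v). (\<forall>k. if k \<in> Kw then w k < dW k else w k = 0) \<and>
                              (\<forall>k. if k \<in> Kv then v k < dV k else v k = 0)}"

text \<open>W_t (x) V_t (x) ... (x) W_1 (x) V_1 (for t = 0 the trivial one-dimensional system).\<close>
definition Lev :: "(nat \<Rightarrow> nat) \<Rightarrow> (nat \<Rightarrow> nat) \<Rightarrow> nat \<Rightarrow> idx set" where
  "Lev dW dV t = IxS dW dV {1..t} {1..t}"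

text \<open>V_t (x) W_(t-1) (x) V_(t-1) (x) ... (x) W_1 (x) V_1.\<close>
definition LevV :: "(nat \<Rightarrow> nat) \<Rightarrow> (nat \<Rightarrow> nat) \<Rightarrow> nat \<Rightarrow> idx set" where
  "LevV dW dV t = IxS dW dV {1..<t} {1..t}"

definition Her :: "idx set \<Rightarrow> op \<Rightarrow> bool" where
  "Her I A \<longleftrightarrow> (\<forall>i j. (i \<notin> I \<or> j \<notin> I) \<longrightarrow> A i j = 0) \<and>
               (\<forall>i\<in>I. \<forall>j\<in>I. A j i = cnj (A i j))"

definition Pos :: "idx set \<Rightarrow> op \<Rightarrow> bool" where
  "Pos I A \<longleftrightarrow> Her I A \<and>
     (\<forall>x :: idx \<Rightarrow> complex. 0 \<le> Re (\<Sum>i\<in>I. \<Sum>j\<in>I. cnj (x i) * A i j * x j))"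

definition trace :: "idx set \<Rightarrow> op \<Rightarrow> complex" where
  "trace I A = (\<Sum>i\<in>I. A i i)"

definition Den :: "idx set \<Rightarrow> op \<Rightarrow> bool" where
  "Den I A \<longleftrightarrow> Pos I A \<and> trace I A = 1"

definition inner_op :: "idx set \<Rightarrow> op \<Rightarrow> op \<Rightarrow> real" where
  "inner_op I A B = Re (\<Sum>i\<in>I. \<Sum>j\<in>I. A i j * B j i)"

definition setW :: "nat \<Rightarrow> nat \<Rightarrow> idx \<Rightarrow> idx" where
  "setW t a i = ((fst i)(t := a), snd i)"

definition setV :: "nat \<Rightarrow> nat \<Rightarrow> idx \<Rightarrow> idx" where
  "setV t a i = (fst i, (snd i)(t := a))"

text \<open>I_(W_t) (x) B, as an operator on the bigger index set I.\<close>
definition tensIW :: "idx set \<Rightarrow> nat \<Rightarrow> op \<Rightarrow> op" where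
  "tensIW I t B = (\<lambda>i j. if i \<in> I \<and> j \<in> I \<and> fst i t = fst j t
                          then B (setW t 0 i) (setW t 0 j) else 0)"

text \<open>I_(V_t) (x) B, as an operator on the bigger index set I.\<close>
definition tensIV :: "idx set \<Rightarrow> nat \<Rightarrow> op \<Rightarrow> op" where
  "tensIV I t B = (\<lambda>i j. if i \<in> I \<and> j \<in> I \<and> snd i t = snd j t
                          then B (setV t 0 i) (setV t 0 j) else 0)"

definition ptrW :: "(nat \<Rightarrow> nat) \<Rightarrow> idx set \<Rightarrow> nat \<Rightarrow> op \<Rightarrow> op" where
  "ptrW dW I t A = (\<lambda>i j. if i \<in> I \<and> j \<in> I
                        then (\<Sum>a<dW t. A (setW t a i) (setW t a j)) else 0)"

definition ptrV :: "(nat \<Rightarrow> nat) \<Rightarrow> idx set \<Rightarrow> nat \<Rightarrow> op \<Rightarrow> op" where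
  "ptrV dV I t A = (\<lambda>i j. if i \<in> I \<and> j \<in> I
                        then (\<Sum>a<dV t. A (setV t a i) (setV t a j)) else 0)"

text \<open>The number 1 as an operator on the trivial system (level 0).\<close>
definition one_op :: "idx set \<Rightarrow> op" where
  "one_op I = (\<lambda>i j. if i \<in> I \<and> j \<in> I then 1 else 0)"

definition Comb :: "nat \<Rightarrow> (nat \<Rightarrow> nat) \<Rightarrow> (nat \<Rightarrow> nat) \<Rightarrow> op set" where
  "Comb T dW dV = {\<tau>. Pos (Lev dW dV T) \<tau> \<and>
     (\<exists>\<tau>s :: nat \<Rightarrow> op.
        \<tau>s 0 = one_op (Lev dW dV 0) \<and> \<tau>s T = \<tau> \<and>
        (\<forall>t. 1 \<le> t \<and> t \<le> T - 1 \<longrightarrow> Pos (Lev dW dV t) (\<tau>s t)) \<and>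
        (\<forall>t. 1 \<le> t \<and> t \<le> T \<longrightarrow>
           ptrW dW (LevV dW dV t) t (\<tau>s t) = tensIV (LevV dW dV t) t (\<tau>s (t - 1))))}"

definition CombDual :: "nat \<Rightarrow> (nat \<Rightarrow> nat) \<Rightarrow> (nat \<Rightarrow> nat) \<Rightarrow> op set" where
  "CombDual T dW dV = {\<tau>. Pos (Lev dW dV T) \<tau> \<and>
     (\<exists>\<tau>s :: nat \<Rightarrow> op.
        Den (LevV dW dV 1) (\<tau>s 1) \<and>
        (\<forall>t. 2 \<le> t \<and> t \<le> T \<longrightarrow> Pos (LevV dW dV t) (\<tau>s t)) \<and>
        \<tau> = tensIW (Lev dW dV T) T (\<tau>s T) \<and>
        (\<forall>t. 2 \<le> t \<and> t \<le> T \<longrightarrow>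
           ptrV dV (Lev dW dV (t - 1)) t (\<tau>s t) =
           tensIW (Lev dW dV (t - 1)) (t - 1) (\<tau>s (t - 1))))}"

text \<open>M-tuples (Phi_1, ..., Phi_M) are represented as functions nat to op, with
  Phi m = 0 for m outside 1..M, so that they form the real vector space Her^M.\<close>

definition HerM :: "nat \<Rightarrow> idx set \<Rightarrow> (nat \<Rightarrow> op) set" where
  "HerM M I = {\<Phi>. (\<forall>m\<in>{1..M}. Her I (\<Phi> m)) \<and> (\<forall>m. m \<notin> {1..M} \<longrightarrow> \<Phi> m = 0)}"

definition CG :: "nat \<Rightarrow> nat \<Rightarrow> (nat \<Rightarrow> nat) \<Rightarrow> (nat \<Rightarrow> nat) \<Rightarrow> (nat \<Rightarrow> op) set" where
  "CG M T dW dV = {\<Phi>. (\<forall>m\<in>{1..M}. Pos (Lev dW dV T) (\<Phi> m)) \<and> (\<forall>m. m \<notin> {1..M} \<longrightarrow> \<Phi> m = 0)}"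

definition SG :: "nat \<Rightarrow> (nat \<Rightarrow> nat) \<Rightarrow> (nat \<Rightarrow> nat) \<Rightarrow> op set" where
  "SG T dW dV = CombDual T dW dV"

definition PG :: "nat \<Rightarrow> nat \<Rightarrow> (nat \<Rightarrow> nat) \<Rightarrow> (nat \<Rightarrow> nat) \<Rightarrow> (nat \<Rightarrow> op) set" where
  "PG M T dW dV = {\<Phi> \<in> CG M T dW dV. (\<Sum>m=1..M. \<Phi> m) \<in> SG T dW dV}"

definition Pobj :: "nat \<Rightarrow> idx set \<Rightarrow> (nat \<Rightarrow> real) \<Rightarrow> (nat \<Rightarrow> op) \<Rightarrow> (nat \<Rightarrow> op) \<Rightarrow> real" where
  "Pobj M I p E \<Phi> = (\<Sum>m=1..M. p m * inner_op I (\<Phi> m) (E m))"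

definition DC :: "nat \<Rightarrow> idx set \<Rightarrow> (nat \<Rightarrow> real) \<Rightarrow> (nat \<Rightarrow> op) \<Rightarrow> (nat \<Rightarrow> op) set \<Rightarrow> op set" where
  "DC M I p E C = {X. Her I X \<and>
     (\<forall>\<Phi>\<in>C. 0 \<le> (\<Sum>m=1..M. inner_op I (\<Phi> m) (X - p m *\<^sub>R E m)))}"

text \<open>D_S(chi) = max over S of <phi, chi> (written as a supremum; it is attained
  when S is nonempty and compact).\<close>
definition DS :: "idx set \<Rightarrow> op set \<Rightarrow> op \<Rightarrow> real" where
  "DS I S X = Sup ((\<lambda>\<phi>. inner_op I \<phi> X) ` S)"

end

theory Submission
  imports Defs
begin

text \<open>
  Weak duality is immediate. For the converse, the objective is linear and continuous, so its
  supremum over \<P> equals its supremum over the closed convex hull, i.e. over the feasible set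
  {\<Phi> \<in> \<C>. \<Sum>m. \<Phi> m \<in> \<S>}. Given z strictly above that supremum, minimise the squared distance
  from (0, z) to the convex set of pairs (\<Sum>m. \<Phi> m - \<phi>, r) with \<Phi> \<in> \<C>, \<phi> \<in> \<S> and r \<le> P \<Phi>.
  Every entry of a positive matrix is bounded by its trace and dual combs have trace
  dim W_1 \<cdot> ... \<cdot> dim W_T, so the sublevel sets are compact and the minimum is attained; it is
  positive because P < z on the feasible set. The first-order condition at the minimiser,
  rescaled, is a Hermitian X with \<langle>\<phi>, X\<rangle> - z < \<langle>\<Sum>m. \<Phi> m, X\<rangle> - P \<Phi> for all \<Phi> \<in> \<C> and
  \<phi> \<in> \<S>. As \<C> is a cone, this forces X \<in> D_C and D_S X \<le> z.
\<close>

section \<open>Index sets of product systems and traces of dual combs\<close>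

lemma sum_apply: "(\<Sum>a\<in>A. f a) x = (\<Sum>a\<in>A. f a x)"
  by (induction A rule: infinite_finite_induct) auto

lemma scaleR_fun_apply [simp]: "(c *\<^sub>R f) x = c *\<^sub>R f x"
  by (simp add: scaleR_fun_def)

definition index_box :: "(nat \<Rightarrow> nat) \<Rightarrow> nat set \<Rightarrow> (nat \<Rightarrow> nat) set" where
  "index_box d K = {w. \<forall>k. if k \<in> K then w k < d k else w k = 0}"

lemma IxS_eq_index_box: "IxS dW dV Kw Kv = index_box dW Kw \<times> index_box dV Kv"
  by (auto simp: IxS_def index_box_def)

lemma bij_betw_index_box_insert:
  assumes "t \<notin> K"
  shows "bij_betw (\<lambda>(w, a). w(t := a)) (index_box d K \<times> {..<d t}) (index_box d (insert t K))"
  by (rule bij_betw_byWitness[where f' = "\<lambda>u. (u(t := 0), u t)"])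
     (use assms in \<open>auto simp: index_box_def fun_eq_iff split: if_splits\<close>)

lemma finite_index_box: "finite K \<Longrightarrow> finite (index_box d K)"
proof (induction K rule: finite_induct)
  case empty
  have "index_box d {} = {\<lambda>_. 0}" by (auto simp: index_box_def)
  then show ?case by simp
next
  case (insert t K)
  then show ?case
    using bij_betw_finite[OF bij_betw_index_box_insert[OF insert(2), of d]] by simp
qed

lemma sum_index_box_insert:
  assumes "t \<notin> K"
  shows "sum g (index_box d (insert t K)) = (\<Sum>w\<in>index_box d K. \<Sum>a<d t. g (w(t := a)))"
  using sum.reindex_bij_betw[OF bij_betw_index_box_insert[OF assms], of g]
  by (simp add: sum.cartesian_product split_def)

lemma sum_IxS_insert_W:
  assumes "t \<notin> Kw"
  shows "sum g (IxS dW dV (insert t Kw) Kv) = (\<Sum>i\<in>IxS dW dV Kw Kv. \<Sum>a<dW t. g (setW t a i))"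
proof -
  have "sum g (IxS dW dV (insert t Kw) Kv) =
      (\<Sum>w\<in>index_box dW Kw. \<Sum>a<dW t. \<Sum>v\<in>index_box dV Kv. g (w(t := a), v))"
    by (simp add: IxS_eq_index_box sum.cartesian_product' sum_index_box_insert[OF assms])
  also have "\<dots> = (\<Sum>w\<in>index_box dW Kw. \<Sum>v\<in>index_box dV Kv. \<Sum>a<dW t. g (w(t := a), v))"
    by (rule sum.cong[OF refl], rule sum.swap)
  finally show ?thesis by (simp add: IxS_eq_index_box sum.cartesian_product' setW_def)
qed

lemma sum_IxS_insert_V:
  assumes "t \<notin> Kv"
  shows "sum g (IxS dW dV Kw (insert t Kv)) = (\<Sum>i\<in>IxS dW dV Kw Kv. \<Sum>a<dV t. g (setV t a i))"
  by (simp add: IxS_eq_index_box sum.cartesian_product' sum_index_box_insert[OF assms] setV_def)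

lemma finite_Lev: "finite (Lev dW dV t)"
  by (simp add: Lev_def IxS_eq_index_box finite_index_box)

lemma sum_Lev_eq_sum_LevV:
  assumes "1 \<le> t"
  shows "sum g (Lev dW dV t) = (\<Sum>i\<in>LevV dW dV t. \<Sum>a<dW t. g (setW t a i))"
proof -
  have "{1..t} = insert t {1..<t}" using assms by auto
  then show ?thesis unfolding Lev_def LevV_def by (simp add: sum_IxS_insert_W)
qed

lemma sum_LevV_eq_sum_Lev:
  assumes "1 \<le> t"
  shows "sum g (LevV dW dV t) = (\<Sum>i\<in>Lev dW dV (t - 1). \<Sum>a<dV t. g (setV t a i))"
proof -
  have "{1..t} = insert t {1..t - 1}" "{1..<t} = {1..t - 1}" "t \<notin> {1..t - 1}"
    using assms by auto
  then show ?thesis unfolding Lev_def LevV_def by (simp only: sum_IxS_insert_V[OF \<open>t \<notin> _\<close>])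
qed

lemma setW_zero_LevV: "i \<in> LevV dW dV t \<Longrightarrow> setW t 0 i = i"
  by (cases i) (auto simp: LevV_def IxS_def setW_def fun_eq_iff dest: spec[of _ t])

lemma setW_setW [simp]: "setW t a (setW t b i) = setW t a i"
  by (simp add: setW_def)

lemma trace_tensIW:
  assumes "1 \<le> t"
  shows "trace (Lev dW dV t) (tensIW (Lev dW dV t) t \<sigma>) = of_nat (dW t) * trace (LevV dW dV t) \<sigma>"
proof -
  have "trace (Lev dW dV t) (tensIW (Lev dW dV t) t \<sigma>) = (\<Sum>i\<in>Lev dW dV t. \<sigma> (setW t 0 i) (setW t 0 i))"
    by (simp add: trace_def tensIW_def)
  also have "\<dots> = (\<Sum>i\<in>LevV dW dV t. \<Sum>a<dW t. \<sigma> i i)"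
    by (simp add: sum_Lev_eq_sum_LevV[OF assms] setW_zero_LevV cong: sum.cong)
  finally show ?thesis by (simp add: trace_def sum_distrib_left)
qed

lemma trace_ptrV:
  assumes "1 \<le> t"
  shows "trace (Lev dW dV (t - 1)) (ptrV dV (Lev dW dV (t - 1)) t \<sigma>) = trace (LevV dW dV t) \<sigma>"
  by (simp add: trace_def ptrV_def sum_LevV_eq_sum_Lev[OF assms])

lemma trace_CombDual:
  assumes "\<tau> \<in> CombDual T dW dV" "1 \<le> T"
  shows "trace (Lev dW dV T) \<tau> = of_nat (\<Prod>s\<in>{1..T}. dW s)"
proof -
  obtain \<tau>s where den: "Den (LevV dW dV 1) (\<tau>s 1)"
    and top: "\<tau> = tensIW (Lev dW dV T) T (\<tau>s T)"
    and link: "\<And>t. 2 \<le> t \<Longrightarrow> t \<le> T \<Longrightarrow>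
      ptrV dV (Lev dW dV (t - 1)) t (\<tau>s t) = tensIW (Lev dW dV (t - 1)) (t - 1) (\<tau>s (t - 1))"
    using assms(1) unfolding CombDual_def by blast
  have trace_level: "trace (LevV dW dV (Suc t)) (\<tau>s (Suc t)) = of_nat (\<Prod>s\<in>{1..t}. dW s)"
    if "Suc t \<le> T" for t
    using that
  proof (induction t)
    case 0
    then show ?case using den by (simp add: Den_def)
  next
    case (Suc t)
    have "trace (LevV dW dV (Suc (Suc t))) (\<tau>s (Suc (Suc t)))
        = trace (Lev dW dV (Suc t)) (tensIW (Lev dW dV (Suc t)) (Suc t) (\<tau>s (Suc t)))"
      using trace_ptrV[of "Suc (Suc t)" dW dV "\<tau>s (Suc (Suc t))"] link[of "Suc (Suc t)"] Suc.prems by simp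
    also have "\<dots> = of_nat (dW (Suc t)) * of_nat (\<Prod>s\<in>{1..t}. dW s)"
      using trace_tensIW[of "Suc t" dW dV] Suc by simp
    finally show ?case by (simp add: prod.nat_ivl_Suc' mult.commute)
  qed
  obtain T' where "T = Suc T'" using assms(2) by (cases T) auto
  then show ?thesis
    using top trace_tensIW[of T dW dV] trace_level[of T'] by (simp add: prod.nat_ivl_Suc' mult.commute)
qed

section \<open>Positive and Hermitian matrices\<close>

lemma double_sum_cong_support:
  fixes g :: "'a \<Rightarrow> 'a \<Rightarrow> 'b::comm_monoid_add"
  assumes "finite I" "K \<subseteq> I" "\<And>i j. i \<notin> K \<or> j \<notin> K \<Longrightarrow> g i j = 0"
  shows "(\<Sum>i\<in>I. \<Sum>j\<in>I. g i j) = (\<Sum>i\<in>K. \<Sum>j\<in>K. g i j)"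
proof -
  have "(\<Sum>i\<in>I. \<Sum>j\<in>I. g i j) = (\<Sum>i\<in>K. \<Sum>j\<in>I. g i j)"
    by (rule sum.mono_neutral_right) (use assms in auto)
  also have "\<dots> = (\<Sum>i\<in>K. \<Sum>j\<in>K. g i j)"
    by (rule sum.cong[OF refl], rule sum.mono_neutral_right) (use assms in auto)
  finally show ?thesis .
qed

lemma Pos_Her: "Pos I A \<Longrightarrow> Her I A"
  by (simp add: Pos_def)

lemma Pos_quad_nonneg: "Pos I A \<Longrightarrow> 0 \<le> Re (\<Sum>i\<in>I. \<Sum>j\<in>I. cnj (x i) * A i j * x j)"
  by (simp add: Pos_def)

lemma HerI:
  "(\<And>i j. i \<notin> I \<or> j \<notin> I \<Longrightarrow> A i j = 0) \<Longrightarrow>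
   (\<And>i j. i \<in> I \<Longrightarrow> j \<in> I \<Longrightarrow> A j i = cnj (A i j)) \<Longrightarrow> Her I A"
  unfolding Her_def by blast

lemma Her_zero_outside: "Her I A \<Longrightarrow> i \<notin> I \<or> j \<notin> I \<Longrightarrow> A i j = 0"
  unfolding Her_def by blast

lemma Her_cnj: "Her I A \<Longrightarrow> i \<in> I \<Longrightarrow> j \<in> I \<Longrightarrow> A j i = cnj (A i j)"
  unfolding Her_def by blast

lemma Her_diag_real: "Her I A \<Longrightarrow> i \<in> I \<Longrightarrow> Im (A i i) = 0"
  by (metis Her_cnj cnj.simps(2) neg_equal_zero)

lemma Pos_diag_nonneg:
  assumes "Pos I A" "finite I" "i \<in> I"
  shows "0 \<le> Re (A i i)"
proof -
  let ?x = "\<lambda>k. if k = i then (1::complex) else 0"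
  have eq: "(\<Sum>k\<in>I. \<Sum>l\<in>I. cnj (?x k) * A k l * ?x l) = A i i"
    by (subst double_sum_cong_support[where K = "{i}"]) (use assms in auto)
  have "0 \<le> Re (\<Sum>k\<in>I. \<Sum>l\<in>I. cnj (?x k) * A k l * ?x l)"
    by (rule Pos_quad_nonneg[OF assms(1)])
  then show ?thesis unfolding eq .
qed

lemma mult_neg_phase:
  fixes a :: complex
  assumes "a \<noteq> 0"
  shows "a * (- cnj a / cmod a) = - cmod a"
proof -
  have "a * cnj a = of_real (cmod a ^ 2)" using complex_norm_square[of a] by simp
  then have "a * (- cnj a / cmod a) = - of_real (cmod a ^ 2) / of_real (cmod a)"
    by (simp add: field_simps)
  also have "\<dots> = - cmod a" using assms by (simp add: power2_eq_square)
  finally show ?thesis .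
qed

lemma cnj_mult_neg_phase:
  fixes a :: complex
  assumes "a \<noteq> 0"
  shows "cnj (- cnj a / cmod a) * (- cnj a / cmod a) = 1"
proof -
  have "a * cnj a = of_real (cmod a ^ 2)" using complex_norm_square[of a] by simp
  then show ?thesis using assms by (simp add: field_simps power2_eq_square)
qed

lemma Pos_norm_entry_le:
  assumes "Pos I A" "finite I" "i \<in> I" "j \<in> I"
  shows "cmod (A i j) \<le> (Re (A i i) + Re (A j j)) / 2"
proof (cases "i = j \<or> A i j = 0")
  case True
  have "0 \<le> Re (A i i)" "0 \<le> Re (A j j)" "Im (A j j) = 0"
    using Pos_diag_nonneg[OF assms(1,2)] Her_diag_real[OF Pos_Her[OF assms(1)]] assms(3,4) by auto
  with True show ?thesis by (auto simp: cmod_eq_Re)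
next
  case False
  then have "i \<noteq> j" by blast
  \<comment> \<open>Evaluate the form at e_i + c e_j; the phase c turns both cross terms into -\<bar>A i j\<bar>.\<close>
  define c where "c = - cnj (A i j) / cmod (A i j)"
  let ?x = "\<lambda>k. if k = i then (1::complex) else if k = j then c else 0"
  have "A i j \<noteq> 0" using False by blast
  then have Aij_c: "A i j * c = - cmod (A i j)" and c_c: "cnj c * c = 1"
    unfolding c_def by (rule mult_neg_phase, rule cnj_mult_neg_phase)
  have "A j i = cnj (A i j)" by (rule Her_cnj[OF Pos_Her[OF assms(1)] assms(3,4)])
  then have "cnj c * A j i = cnj (A i j * c)" by (simp add: mult.commute)
  then have Aji_c: "cnj c * A j i = - cmod (A i j)" by (simp add: Aij_c)
  have "(\<Sum>k\<in>I. \<Sum>l\<in>I. cnj (?x k) * A k l * ?x l) = (\<Sum>k\<in>{i, j}. \<Sum>l\<in>{i, j}. cnj (?x k) * A k l * ?x l)"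
    by (rule double_sum_cong_support) (use assms in auto)
  also have "\<dots> = A i i + A i j * c + cnj c * A j i + cnj c * c * A j j"
    using \<open>i \<noteq> j\<close> by (simp add: algebra_simps)
  also have "\<dots> = A i i + A j j - 2 * cmod (A i j)"
    by (simp add: Aij_c Aji_c c_c)
  finally have "0 \<le> Re (A i i + A j j - 2 * cmod (A i j))"
    using Pos_quad_nonneg[OF assms(1), of ?x] by simp
  then show ?thesis by simp
qed

lemma trace_Pos_nonneg:
  assumes "Pos I A" "finite I"
  shows "0 \<le> Re (trace I A)"
  using Pos_diag_nonneg[OF assms] by (simp add: trace_def Re_sum sum_nonneg)

lemma norm_entry_le_trace_Pos:
  assumes "Pos I A" "finite I"
  shows "cmod (A i j) \<le> Re (trace I A)"
proof (cases "i \<in> I \<and> j \<in> I")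
  case True
  have "Re (A k k) \<le> Re (trace I A)" if "k \<in> I" for k
    using Pos_diag_nonneg[OF assms] assms(2) that
    by (auto simp: trace_def Re_sum intro!: member_le_sum)
  then have "Re (A i i) \<le> Re (trace I A)" "Re (A j j) \<le> Re (trace I A)" using True by auto
  then show ?thesis using Pos_norm_entry_le[OF assms] True by fastforce
next
  case False
  then have "A i j = 0" using Her_zero_outside[OF Pos_Her[OF assms(1)]] by blast
  then show ?thesis using trace_Pos_nonneg[OF assms] by simp
qed

lemma trace_sum: "trace I (\<Sum>m\<in>K. F m) = (\<Sum>m\<in>K. trace I (F m))"
  unfolding trace_def sum_apply by (rule sum.swap)

lemma Her_add:
  assumes "Her I A" "Her I B"
  shows "Her I (A + B)"
proof (rule HerI)
  fix i j assume out: "i \<notin> I \<or> j \<notin> I"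
  show "(A + B) i j = 0"
    using Her_zero_outside[OF assms(1) out] Her_zero_outside[OF assms(2) out] by simp
next
  fix i j assume "i \<in> I" "j \<in> I"
  then show "(A + B) j i = cnj ((A + B) i j)"
    using Her_cnj[OF assms(1) \<open>i \<in> I\<close> \<open>j \<in> I\<close>] Her_cnj[OF assms(2) \<open>i \<in> I\<close> \<open>j \<in> I\<close>] by simp
qed

lemma Her_scaleR:
  assumes "Her I A"
  shows "Her I (c *\<^sub>R A)"
proof (rule HerI)
  fix i j assume out: "i \<notin> I \<or> j \<notin> I"
  show "(c *\<^sub>R A) i j = 0" using Her_zero_outside[OF assms out] by simp
next
  fix i j assume "i \<in> I" "j \<in> I"
  then have "A j i = cnj (A i j)" by (rule Her_cnj[OF assms])
  then show "(c *\<^sub>R A) j i = cnj ((c *\<^sub>R A) i j)" by (simp add: scaleR_conv_of_real)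
qed

lemma Her_diff: "Her I A \<Longrightarrow> Her I B \<Longrightarrow> Her I (A - B)"
  using Her_add[of I A "(- 1) *\<^sub>R B"] Her_scaleR[of I B "- 1"] by simp

lemma Her_sum: "(\<And>m. m \<in> K \<Longrightarrow> Her I (F m)) \<Longrightarrow> Her I (\<Sum>m\<in>K. F m)"
proof (induction K rule: infinite_finite_induct)
  case (infinite K)
  then show ?case by (simp add: Her_def)
next
  case empty
  then show ?case by (simp add: Her_def)
next
  case (insert m K)
  then show ?case unfolding sum.insert[OF insert(1,2)] by (intro Her_add) auto
qed

section \<open>The trace pairing\<close>

lemma inner_op_commute: "inner_op I A B = inner_op I B A"
  unfolding inner_op_def by (subst sum.swap) (simp add: mult.commute)

lemma inner_op_add_left: "inner_op I (A + B) X = inner_op I A X + inner_op I B X"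
  by (simp add: inner_op_def distrib_right sum.distrib)

lemma inner_op_diff_left: "inner_op I (A - B) X = inner_op I A X - inner_op I B X"
  by (simp add: inner_op_def left_diff_distrib sum_subtractf)

lemma inner_op_scaleR_left: "inner_op I (c *\<^sub>R A) X = c * inner_op I A X"
  by (simp add: inner_op_def scaleR_conv_of_real sum_distrib_left mult.assoc)

lemma inner_op_sum_left: "inner_op I (\<Sum>m\<in>K. F m) X = (\<Sum>m\<in>K. inner_op I (F m) X)"
proof (induction K rule: infinite_finite_induct)
  case (insert m K)
  then show ?case by (simp only: sum.insert[OF insert(1,2)] inner_op_add_left)
qed (simp_all add: inner_op_def)

lemma inner_op_add_right: "inner_op I X (A + B) = inner_op I X A + inner_op I X B"
  by (simp add: inner_op_commute[of I X] inner_op_add_left)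

lemma inner_op_diff_right: "inner_op I X (A - B) = inner_op I X A - inner_op I X B"
  by (simp add: inner_op_commute[of I X] inner_op_diff_left)

lemma inner_op_scaleR_right: "inner_op I X (c *\<^sub>R A) = c * inner_op I X A"
  by (simp add: inner_op_commute[of I X] inner_op_scaleR_left)

lemma inner_op_add_scaleR_self:
  "inner_op I (A + t *\<^sub>R B) (A + t *\<^sub>R B) =
     inner_op I A A + 2 * t * inner_op I B A + t\<^sup>2 * inner_op I B B"
  by (simp add: inner_op_add_left inner_op_add_right inner_op_scaleR_left inner_op_scaleR_right
      inner_op_commute[of I A B] power2_eq_square algebra_simps)

lemma inner_op_self_Her:
  assumes "Her I Y"
  shows "inner_op I Y Y = (\<Sum>i\<in>I. \<Sum>j\<in>I. (cmod (Y i j))\<^sup>2)"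
  unfolding inner_op_def Re_sum
proof (intro sum.cong refl)
  fix i j assume "i \<in> I" "j \<in> I"
  then have "Y j i = cnj (Y i j)" by (rule Her_cnj[OF assms])
  then show "Re (Y i j * Y j i) = (cmod (Y i j))\<^sup>2" unfolding cmod_power2 by (simp add: power2_eq_square)
qed

lemma Her_eq_zero_iff_inner_op_self:
  assumes "finite I" "Her I Y"
  shows "Y = 0 \<longleftrightarrow> inner_op I Y Y = 0"
proof
  assume "inner_op I Y Y = 0"
  then have "(cmod (Y i j))\<^sup>2 = 0" if "i \<in> I" "j \<in> I" for i j
    using that assms unfolding inner_op_self_Her[OF assms(2)]
    by (simp add: sum_nonneg_eq_0_iff sum_nonneg)
  then have "Y i j = 0" for i j
    using Her_zero_outside[OF assms(2), of i j] by (cases "i \<in> I \<and> j \<in> I") auto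
  then show "Y = 0" by (simp add: fun_eq_iff)
qed (simp add: inner_op_def)

lemma inner_op_le_entry_bound:
  assumes "\<And>i j. cmod (A i j) \<le> c"
  shows "inner_op I A X \<le> (\<Sum>i\<in>I. \<Sum>j\<in>I. c * cmod (X j i))"
proof -
  have "inner_op I A X \<le> (\<Sum>i\<in>I. \<Sum>j\<in>I. cmod (A i j * X j i))"
    unfolding inner_op_def
    by (rule order_trans[OF complex_Re_le_cmod], rule order_trans[OF norm_sum])
       (intro sum_mono norm_sum)
  also have "\<dots> \<le> (\<Sum>i\<in>I. \<Sum>j\<in>I. c * cmod (X j i))"
    by (intro sum_mono) (simp add: norm_mult mult_right_mono assms)
  finally show ?thesis .
qed

lemma continuous_on_entry:
  assumes "continuous_on S F"
  shows "continuous_on S (\<lambda>x. (F x :: op) i j)"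
  using continuous_on_product_then_coordinatewise[OF continuous_on_product_then_coordinatewise[OF assms]] .

lemma continuous_on_inner_op:
  assumes "continuous_on S F" "continuous_on S G"
  shows "continuous_on S (\<lambda>x. inner_op I (F x) (G x))"
  unfolding inner_op_def
  by (intro continuous_on_Re continuous_on_sum continuous_on_mult
      continuous_on_entry[OF assms(1)] continuous_on_entry[OF assms(2)])

section \<open>Strong duality for conic programs with a bounded dual set\<close>

lemma nonneg_if_nonneg_near_zero:
  fixes a b :: real
  assumes "\<And>t. 0 < t \<Longrightarrow> t \<le> 1 \<Longrightarrow> 0 \<le> a + t * b"
  shows "0 \<le> a"
proof (rule tendsto_lowerbound)
  show "((\<lambda>t. a + t * b) \<longlongrightarrow> a) (at_right 0)"
    by (auto intro!: tendsto_eq_intros)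
  show "\<forall>\<^sub>F t in at_right 0. 0 \<le> a + t * b"
    using eventually_at_right_real[OF zero_less_one] by eventually_elim (use assms in auto)
qed simp

lemma cone_separation:
  fixes a :: "'a::real_vector \<Rightarrow> real"
  assumes "cone C" "x0 \<in> C" "y0 \<in> S"
    and homogeneous: "\<And>c x. x \<in> C \<Longrightarrow> 0 \<le> c \<Longrightarrow> a (c *\<^sub>R x) = c * a x"
    and separates: "\<And>x y. x \<in> C \<Longrightarrow> y \<in> S \<Longrightarrow> b y < a x"
  shows "\<forall>y\<in>S. b y < 0" and "\<forall>x\<in>C. 0 \<le> a x"
proof -
  have "0 \<in> C" using assms(1,2) unfolding cone_def by (metis scaleR_zero_left order_refl)
  moreover have "a 0 = 0" using homogeneous[OF assms(2), of 0] by simp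
  ultimately show neg: "\<forall>y\<in>S. b y < 0" using separates by fastforce
  show "\<forall>x\<in>C. 0 \<le> a x"
  proof (rule ballI, rule ccontr)
    fix x assume x: "x \<in> C" and "\<not> 0 \<le> a x"
    define c where "c = b y0 / a x"
    have "b y0 < 0" using neg assms(3) by blast
    then have "0 \<le> c" using \<open>\<not> 0 \<le> a x\<close> by (simp add: c_def divide_nonpos_neg)
    then have "b y0 < a (c *\<^sub>R x)" using assms(1) x unfolding cone_def by (intro separates assms(3)) blast
    also have "\<dots> = b y0" using \<open>\<not> 0 \<le> a x\<close> \<open>0 \<le> c\<close> by (simp add: homogeneous[OF x] c_def)
    finally show False by simp
  qed
qed

lemma compact_PiE_UNIV_const:
  fixes K :: "'b::topological_space set"
  assumes "compact K"
  shows "compact (PiE (UNIV :: 'a set) (\<lambda>_. K))"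
  using compactin_PiE[of "\<lambda>_. euclidean" UNIV "\<lambda>_. K"] assms
  by (simp add: euclidean_product_topology)

lemma le_one_plus_square: "(y::real) \<le> 1 + y\<^sup>2"
proof (cases "y \<le> 1")
  case True
  then show ?thesis using zero_le_power2[of y] by linarith
next
  case False
  then have "y * 1 \<le> y * y" by (intro mult_left_mono) auto
  then show ?thesis by (simp add: power2_eq_square)
qed

lemma SUP_closure_convex_hull:
  fixes g :: "'a::{real_vector,topological_space} \<Rightarrow> real"
  assumes "linear g" "continuous_on UNIV g"
  shows "(SUP x\<in>closure (convex hull P). ereal (g x)) = (SUP x\<in>P. ereal (g x))"
proof (rule antisym)
  show "(SUP x\<in>P. ereal (g x)) \<le> (SUP x\<in>closure (convex hull P). ereal (g x))"
    by (rule SUP_subset_mono) (auto intro: subsetD[OF closure_subset] hull_inc)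
  show "(SUP x\<in>closure (convex hull P). ereal (g x)) \<le> (SUP x\<in>P. ereal (g x))"
  proof (cases "SUP x\<in>P. ereal (g x)")
    case (real v)
    have "P \<subseteq> g -` {..v}"
      using SUP_upper[of _ P "\<lambda>x. ereal (g x)"] real by fastforce
    moreover have "convex (g -` {..v})"
      by (rule convex_linear_vimage[OF assms(1) convex_real_interval(2)])
    moreover have "closed (g -` {..v})"
      using closed_Collect_le[OF assms(2) continuous_on_const, of v] by (simp add: vimage_def)
    ultimately have "closure (convex hull P) \<subseteq> g -` {..v}"
      by (intro closure_minimal hull_minimal)
    then show ?thesis unfolding real by (intro SUP_least) auto
  next
    case MInf
    then have "P = {}" using SUP_upper[of _ P "\<lambda>x. ereal (g x)"] by fastforce
    then show ?thesis by simp
  qed simp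
qed

locale conic_program =
  fixes I :: "idx set" and M :: nat and C :: "(nat \<Rightarrow> op) set" and S :: "op set"
    and f :: "(nat \<Rightarrow> op) \<Rightarrow> real" and trace_bound :: real
  assumes finite_I: "finite I"
    and closed_C: "closed C" and convex_C: "convex C" and cone_C: "cone C"
    and Pos_C: "\<And>\<Phi> m. \<Phi> \<in> C \<Longrightarrow> m \<in> {1..M} \<Longrightarrow> Pos I (\<Phi> m)"
    and zero_C: "\<And>\<Phi> m. \<Phi> \<in> C \<Longrightarrow> m \<notin> {1..M} \<Longrightarrow> \<Phi> m = 0"
    and closed_S: "closed S" and convex_S: "convex S"
    and Pos_S: "\<And>\<phi>. \<phi> \<in> S \<Longrightarrow> Pos I \<phi>"
    and trace_S_le: "\<And>\<phi>. \<phi> \<in> S \<Longrightarrow> Re (trace I \<phi>) \<le> trace_bound"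
    and linear_f: "linear f" and continuous_f: "continuous_on UNIV f"
begin

definition feasible :: "(nat \<Rightarrow> op) set" where
  "feasible = {\<Phi> \<in> C. (\<Sum>m=1..M. \<Phi> m) \<in> S}"

definition dual_feasible :: "op set" where
  "dual_feasible = {X. Her I X \<and> (\<forall>\<Phi>\<in>C. f \<Phi> \<le> inner_op I (\<Sum>m=1..M. \<Phi> m) X)}"

lemma norm_entry_S_le: "\<phi> \<in> S \<Longrightarrow> cmod (\<phi> i j) \<le> trace_bound"
  using norm_entry_le_trace_Pos[OF Pos_S finite_I] trace_S_le by (meson order_trans)

lemma weak_duality:
  assumes "\<Phi> \<in> feasible" "X \<in> dual_feasible"
  shows "f \<Phi> \<le> DS I S X"
proof -
  have bdd: "bdd_above ((\<lambda>\<phi>. inner_op I \<phi> X) ` S)"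
    by (rule bdd_aboveI2[where M = "\<Sum>i\<in>I. \<Sum>j\<in>I. trace_bound * cmod (X j i)"])
       (rule inner_op_le_entry_bound[OF norm_entry_S_le])
  have "f \<Phi> \<le> inner_op I (\<Sum>m=1..M. \<Phi> m) X"
    using assms by (simp add: feasible_def dual_feasible_def)
  also have "\<dots> \<le> DS I S X"
    unfolding DS_def using assms(1) by (intro cSup_upper bdd) (simp add: feasible_def)
  finally show ?thesis .
qed

definition hypograph :: "((nat \<Rightarrow> op) \<times> op \<times> real) set" where
  "hypograph = {(\<Phi>, \<phi>, r). \<Phi> \<in> C \<and> \<phi> \<in> S \<and> r \<le> f \<Phi>}"

definition residual :: "(nat \<Rightarrow> op) \<times> op \<times> real \<Rightarrow> op" where
  "residual x = (\<Sum>m=1..M. fst x m) - fst (snd x)"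

text \<open>On the hypograph the residual is Hermitian, and there dist2 z x is the squared
  Hilbert-Schmidt distance of (residual x, r) from (0, z).\<close>

definition dist2 :: "real \<Rightarrow> (nat \<Rightarrow> op) \<times> op \<times> real \<Rightarrow> real" where
  "dist2 z x = inner_op I (residual x) (residual x) + (snd (snd x) - z)\<^sup>2"

lemma linear_residual: "linear residual"
  by (rule linearI) (simp_all add: residual_def sum.distrib scaleR_sum_right algebra_simps)

lemma convex_hypograph: "convex hypograph"
proof (rule convexI)
  fix x y :: "(nat \<Rightarrow> op) \<times> op \<times> real" and u v :: real
  assume "x \<in> hypograph" "y \<in> hypograph" and uv: "0 \<le> u" "0 \<le> v" "u + v = 1"
  then obtain \<Phi> \<phi> r \<Psi> \<psi> s where x: "x = (\<Phi>, \<phi>, r)" "\<Phi> \<in> C" "\<phi> \<in> S" "r \<le> f \<Phi>"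
    and y: "y = (\<Psi>, \<psi>, s)" "\<Psi> \<in> C" "\<psi> \<in> S" "s \<le> f \<Psi>"
    unfolding hypograph_def by auto
  have "u * r + v * s \<le> u * f \<Phi> + v * f \<Psi>"
    using x y uv by (intro add_mono mult_left_mono) auto
  also have "\<dots> = f (u *\<^sub>R \<Phi> + v *\<^sub>R \<Psi>)"
    using linear_f by (simp add: linear_add linear_scale)
  finally show "u *\<^sub>R x + v *\<^sub>R y \<in> hypograph"
    using x y uv by (simp add: hypograph_def convexD[OF convex_C] convexD[OF convex_S])
qed

lemma closed_hypograph: "closed hypograph"
proof -
  have "hypograph = (C \<times> S \<times> UNIV) \<inter> {x. snd (snd x) \<le> f (fst x)}"
    by (auto simp: hypograph_def)
  moreover have "closed {x :: (nat \<Rightarrow> op) \<times> op \<times> real. snd (snd x) \<le> f (fst x)}"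
    by (rule closed_Collect_le[OF continuous_on_snd[OF continuous_on_snd[OF continuous_on_id]]
          continuous_on_compose2[OF continuous_f continuous_on_fst[OF continuous_on_id] subset_UNIV]])
  ultimately show ?thesis by (simp add: closed_Int closed_Times closed_C closed_S)
qed

lemma Her_residual:
  assumes "x \<in> hypograph"
  shows "Her I (residual x)"
proof -
  obtain \<Phi> \<phi> r where x: "x = (\<Phi>, \<phi>, r)" "\<Phi> \<in> C" "\<phi> \<in> S"
    using assms unfolding hypograph_def by auto
  have "Her I (\<Sum>m=1..M. \<Phi> m)" by (intro Her_sum Pos_Her Pos_C[OF \<open>\<Phi> \<in> C\<close>])
  moreover have "Her I \<phi>" by (rule Pos_Her[OF Pos_S[OF \<open>\<phi> \<in> S\<close>]])
  ultimately show ?thesis unfolding residual_def x(1) by (simp add: Her_diff)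
qed

lemma dist2_hypograph:
  "x \<in> hypograph \<Longrightarrow> dist2 z x = (\<Sum>i\<in>I. \<Sum>j\<in>I. (cmod (residual x i j))\<^sup>2) + (snd (snd x) - z)\<^sup>2"
  by (simp add: dist2_def inner_op_self_Her[OF Her_residual])

lemma continuous_residual: "continuous_on UNIV residual"
proof -
  have "continuous_on UNIV (\<lambda>x. residual x i j)" for i j
  proof -
    have "continuous_on UNIV (\<lambda>x :: (nat \<Rightarrow> op) \<times> op \<times> real. fst x m i j)" for m
      by (rule continuous_on_entry[OF continuous_on_product_then_coordinatewise[OF
            continuous_on_fst[OF continuous_on_id]]])
    moreover have "continuous_on UNIV (\<lambda>x :: (nat \<Rightarrow> op) \<times> op \<times> real. fst (snd x) i j)"
      by (rule continuous_on_entry[OF continuous_on_fst[OF continuous_on_snd[OF continuous_on_id]]])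
    ultimately show ?thesis
      unfolding residual_def by (simp add: sum_apply continuous_on_diff continuous_on_sum)
  qed
  then show ?thesis
    by (intro continuous_on_coordinatewise_then_product[of UNIV residual]
        continuous_on_coordinatewise_then_product[of UNIV "\<lambda>x. residual x _"])
qed

lemma continuous_dist2: "continuous_on UNIV (dist2 z)"
  unfolding dist2_def
  by (intro continuous_on_add continuous_on_inner_op continuous_residual continuous_on_power
      continuous_on_diff continuous_on_snd continuous_on_id continuous_on_const)

lemma dist2_nonneg: "x \<in> hypograph \<Longrightarrow> 0 \<le> dist2 z x"
  by (simp add: dist2_hypograph sum_nonneg)

lemma norm_residual_sq_le_dist2:
  assumes "x \<in> hypograph" "i \<in> I" "j \<in> I"
  shows "(cmod (residual x i j))\<^sup>2 \<le> dist2 z x"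
proof -
  have "(cmod (residual x i j))\<^sup>2 \<le> (\<Sum>j\<in>I. (cmod (residual x i j))\<^sup>2)"
    by (rule member_le_sum) (use assms finite_I in auto)
  also have "\<dots> \<le> (\<Sum>i\<in>I. \<Sum>j\<in>I. (cmod (residual x i j))\<^sup>2)"
    by (rule member_le_sum[where f = "\<lambda>i. \<Sum>j\<in>I. (cmod (residual x i j))\<^sup>2"])
       (use assms finite_I in \<open>auto intro: sum_nonneg\<close>)
  finally show ?thesis
    using dist2_hypograph[OF assms(1), of z] zero_le_power2[of "snd (snd x) - z"] by linarith
qed

lemma sq_le_dist2: "x \<in> hypograph \<Longrightarrow> (snd (snd x) - z)\<^sup>2 \<le> dist2 z x"
  by (simp add: dist2_hypograph sum_nonneg)

lemma Re_trace_sum_le_sublevel: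
  assumes "(\<Phi>, \<phi>, r) \<in> hypograph" "dist2 z (\<Phi>, \<phi>, r) \<le> c"
  shows "Re (trace I (\<Sum>m=1..M. \<Phi> m)) \<le> real (card I) * (1 + c) + trace_bound"
proof -
  let ?Y = "residual (\<Phi>, \<phi>, r)"
  have "Re (trace I (\<Sum>m=1..M. \<Phi> m)) = (\<Sum>i\<in>I. Re (?Y i i)) + Re (trace I \<phi>)"
    by (simp add: residual_def trace_def Re_sum sum.distrib[symmetric])
  also have "\<dots> \<le> (\<Sum>i\<in>I. 1 + c) + trace_bound"
  proof (intro add_mono sum_mono)
    fix i assume "i \<in> I"
    have "Re (?Y i i) \<le> cmod (?Y i i)" by (rule complex_Re_le_cmod)
    also have "\<dots> \<le> 1 + (cmod (?Y i i))\<^sup>2" by (rule le_one_plus_square)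
    also have "\<dots> \<le> 1 + c"
      using norm_residual_sq_le_dist2[OF assms(1) \<open>i \<in> I\<close> \<open>i \<in> I\<close>, of z] assms(2) by linarith
    finally show "Re (?Y i i) \<le> 1 + c" .
  qed (use assms(1) trace_S_le in \<open>auto simp: hypograph_def\<close>)
  finally show ?thesis by simp
qed

lemma hypograph_sublevel_bounds:
  assumes "(\<Phi>, \<phi>, r) \<in> hypograph" "dist2 z (\<Phi>, \<phi>, r) \<le> c"
  shows "cmod (\<phi> i j) \<le> real (card I) * (1 + c) + trace_bound"
    and "cmod (\<Phi> m i j) \<le> real (card I) * (1 + c) + trace_bound"
    and "\<bar>r - z\<bar> \<le> 1 + c"
proof -
  have \<Phi>: "\<Phi> \<in> C" and \<phi>: "\<phi> \<in> S" using assms(1) by (auto simp: hypograph_def)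
  have c: "0 \<le> c" using dist2_nonneg[OF assms(1), of z] assms(2) by linarith
  then show "cmod (\<phi> i j) \<le> real (card I) * (1 + c) + trace_bound"
    using norm_entry_S_le[OF \<phi>] by (smt (verit) mult_nonneg_nonneg of_nat_0_le_iff)
  show "cmod (\<Phi> m i j) \<le> real (card I) * (1 + c) + trace_bound"
  proof (cases "m \<in> {1..M}")
    case True
    have "cmod (\<Phi> m i j) \<le> Re (trace I (\<Phi> m))"
      by (rule norm_entry_le_trace_Pos[OF Pos_C[OF \<Phi> True] finite_I])
    also have "\<dots> \<le> (\<Sum>m'=1..M. Re (trace I (\<Phi> m')))"
      by (rule member_le_sum) (use True trace_Pos_nonneg[OF Pos_C[OF \<Phi>] finite_I] in auto)
    also have "\<dots> \<le> real (card I) * (1 + c) + trace_bound"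
      using Re_trace_sum_le_sublevel[OF assms] by (simp add: trace_sum)
    finally show ?thesis .
  next
    case False
    then show ?thesis using zero_C[OF \<Phi> False] c trace_S_le[OF \<phi>] trace_Pos_nonneg[OF Pos_S[OF \<phi>] finite_I]
      by simp
  qed
  have "(r - z)\<^sup>2 \<le> c" using sq_le_dist2[OF assms(1), of z] assms(2) by simp
  then show "\<bar>r - z\<bar> \<le> 1 + c" using le_one_plus_square[of "\<bar>r - z\<bar>"] by simp
qed

lemma compact_hypograph_sublevel: "compact (hypograph \<inter> {x. dist2 z x \<le> c})"
proof -
  define R where "R = real (card I) * (1 + c) + trace_bound"
  define box :: "((nat \<Rightarrow> op) \<times> op \<times> real) set" where
    "box = PiE UNIV (\<lambda>_. PiE UNIV (\<lambda>_. PiE UNIV (\<lambda>_. cball (0::complex) R))) \<times>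
           PiE UNIV (\<lambda>_. PiE UNIV (\<lambda>_. cball (0::complex) R)) \<times> cball z (1 + c)"
  have "compact box"
    unfolding box_def by (intro compact_Times compact_PiE_UNIV_const compact_cball)
  moreover have "hypograph \<inter> {x. dist2 z x \<le> c} \<subseteq> box"
  proof (clarify)
    fix \<Phi> \<phi> r assume "(\<Phi>, \<phi>, r) \<in> hypograph" "dist2 z (\<Phi>, \<phi>, r) \<le> c"
    from hypograph_sublevel_bounds[OF this] show "(\<Phi>, \<phi>, r) \<in> box"
      by (simp add: box_def R_def PiE_UNIV_domain Pi_iff dist_real_def abs_minus_commute)
  qed
  moreover have "closed (hypograph \<inter> {x. dist2 z x \<le> c})"
    by (intro closed_Int closed_hypograph closed_Collect_le continuous_dist2 continuous_on_const)
  ultimately show ?thesis by (metis compact_Int_closed inf.absorb_iff2)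
qed

lemma dist2_attains_min:
  assumes "x1 \<in> hypograph"
  obtains x0 where "x0 \<in> hypograph" "\<And>x. x \<in> hypograph \<Longrightarrow> dist2 z x0 \<le> dist2 z x"
proof -
  let ?K = "hypograph \<inter> {x. dist2 z x \<le> dist2 z x1}"
  have "?K \<noteq> {}" using assms by auto
  then have "\<exists>x0\<in>?K. \<forall>y\<in>?K. dist2 z x0 \<le> dist2 z y"
    by (rule continuous_attains_inf[OF compact_hypograph_sublevel _
          continuous_on_subset[OF continuous_dist2 subset_UNIV]])
  then obtain x0 where x0: "x0 \<in> ?K" and min: "\<forall>y\<in>?K. dist2 z x0 \<le> dist2 z y"
    by blast
  have "dist2 z x0 \<le> dist2 z x" if "x \<in> hypograph" for x
    using that x0 min by (cases "dist2 z x \<le> dist2 z x1") auto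
  with x0 that show ?thesis by blast
qed

lemma dist2_pos:
  assumes "\<forall>\<Phi>\<in>feasible. f \<Phi> < z" "x \<in> hypograph"
  shows "0 < dist2 z x"
proof (rule ccontr)
  assume "\<not> 0 < dist2 z x"
  obtain \<Phi> \<phi> r where x: "x = (\<Phi>, \<phi>, r)" "\<Phi> \<in> C" "\<phi> \<in> S" "r \<le> f \<Phi>"
    using assms(2) unfolding hypograph_def by auto
  have "inner_op I (residual x) (residual x) = 0" "r = z"
    using \<open>\<not> 0 < dist2 z x\<close> dist2_nonneg[OF assms(2), of z] sq_le_dist2[OF assms(2), of z]
      inner_op_self_Her[OF Her_residual[OF assms(2)]] sum_nonneg
    by (auto simp: dist2_def x(1) sum_nonneg)
  then have "(\<Sum>m=1..M. \<Phi> m) = \<phi>"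
    using Her_eq_zero_iff_inner_op_self[OF finite_I Her_residual[OF assms(2)]]
    by (simp add: residual_def x(1))
  then have "\<Phi> \<in> feasible" using x by (simp add: feasible_def)
  then show False using assms(1) x \<open>r = z\<close> by fastforce
qed

lemma dist2_min_variational:
  assumes x0: "x0 \<in> hypograph" and min: "\<And>x. x \<in> hypograph \<Longrightarrow> dist2 z x0 \<le> dist2 z x"
    and x: "x \<in> hypograph"
  shows "0 \<le> inner_op I (residual x - residual x0) (residual x0)
              + (snd (snd x0) - z) * (snd (snd x) - snd (snd x0))"
    (is "0 \<le> ?A")
proof -
  define V where "V = residual x - residual x0"
  define w where "w = snd (snd x) - snd (snd x0)"
  define B where "B = inner_op I V V + w\<^sup>2"
  have "0 \<le> 2 * ?A + t * B" if t: "0 < t" "t \<le> 1" for t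
  proof -
    define xt where "xt = (1 - t) *\<^sub>R x0 + t *\<^sub>R x"
    have "xt \<in> hypograph" unfolding xt_def using t by (intro convexD[OF convex_hypograph x0 x]) auto
    have "residual xt = (1 - t) *\<^sub>R residual x0 + t *\<^sub>R residual x"
      using linear_residual by (simp add: xt_def linear_add linear_scale)
    also have "\<dots> = residual x0 + t *\<^sub>R V"
      by (simp add: V_def algebra_simps)
    finally have res: "residual xt = residual x0 + t *\<^sub>R V" .
    have last: "snd (snd xt) - z = (snd (snd x0) - z) + t * w"
      by (simp add: xt_def w_def algebra_simps)
    have "dist2 z xt = inner_op I (residual x0 + t *\<^sub>R V) (residual x0 + t *\<^sub>R V)
        + ((snd (snd x0) - z) + t * w)\<^sup>2"
      by (simp only: dist2_def res last)
    also have "\<dots> = dist2 z x0 + t * (2 * ?A + t * B)"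
      unfolding inner_op_add_scaleR_self
      by (simp add: dist2_def B_def V_def w_def power2_eq_square algebra_simps)
    finally have "dist2 z xt = dist2 z x0 + t * (2 * ?A + t * B)" .
    with min[OF \<open>xt \<in> hypograph\<close>] have "0 \<le> t * (2 * ?A + t * B)" by simp
    then show ?thesis using t by (simp add: zero_le_mult_iff)
  qed
  then have "0 \<le> 2 * ?A" by (rule nonneg_if_nonneg_near_zero)
  then show ?thesis by simp
qed

lemma dist2_min_separates:
  assumes z: "\<forall>\<Phi>\<in>feasible. f \<Phi> < z" and x0: "x0 \<in> hypograph"
    and min: "\<And>x. x \<in> hypograph \<Longrightarrow> dist2 z x0 \<le> dist2 z x"
    and "\<Phi> \<in> C" "\<phi> \<in> S"
  shows "inner_op I \<phi> (residual x0) - (z - snd (snd x0)) * z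
       < inner_op I (\<Sum>m=1..M. \<Phi> m) (residual x0) - (z - snd (snd x0)) * f \<Phi>"
proof -
  have "(\<Phi>, \<phi>, f \<Phi>) \<in> hypograph" using assms(4,5) by (simp add: hypograph_def)
  from dist2_min_variational[OF x0 min this]
  have "0 \<le> inner_op I ((\<Sum>m=1..M. \<Phi> m) - \<phi> - residual x0) (residual x0)
      + (snd (snd x0) - z) * (f \<Phi> - snd (snd x0))"
    by (simp add: residual_def)
  moreover have "0 < inner_op I (residual x0) (residual x0) + (snd (snd x0) - z)\<^sup>2"
    using dist2_pos[OF z x0] by (simp add: dist2_def)
  ultimately show ?thesis
    by (simp add: inner_op_diff_left inner_op_add_left power2_eq_square algebra_simps)
qed

lemma exists_strictly_separating:
  assumes "\<Phi>0 \<in> feasible" "\<forall>\<Phi>\<in>feasible. f \<Phi> < z"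
  obtains X where "Her I X"
    and "\<And>\<Phi> \<phi>. \<Phi> \<in> C \<Longrightarrow> \<phi> \<in> S \<Longrightarrow> inner_op I \<phi> X - z < inner_op I (\<Sum>m=1..M. \<Phi> m) X - f \<Phi>"
proof -
  have \<Phi>0: "\<Phi>0 \<in> C" "(\<Sum>m=1..M. \<Phi>0 m) \<in> S" using assms(1) by (auto simp: feasible_def)
  then have "(\<Phi>0, \<Sum>m=1..M. \<Phi>0 m, f \<Phi>0) \<in> hypograph" by (simp add: hypograph_def)
  then obtain x0 where x0: "x0 \<in> hypograph"
    and x0_min: "\<And>x. x \<in> hypograph \<Longrightarrow> dist2 z x0 \<le> dist2 z x"
    by (rule dist2_attains_min[where z = z]) blast
  define gap where "gap = z - snd (snd x0)"
  have sep: "inner_op I \<phi> (residual x0) - gap * z < inner_op I (\<Sum>m=1..M. \<Phi> m) (residual x0) - gap * f \<Phi>"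
    if "\<Phi> \<in> C" "\<phi> \<in> S" for \<Phi> \<phi>
    unfolding gap_def by (rule dist2_min_separates) (use assms(2) x0 x0_min that in auto)
  have "0 < gap"
  proof (rule ccontr)
    assume "\<not> 0 < gap"
    then have "gap * z \<le> gap * f \<Phi>0"
      using assms by (intro mult_left_mono_neg) (auto simp: less_imp_le)
    then show False using sep[OF \<Phi>0] by simp
  qed
  define X where "X = (1 / gap) *\<^sub>R residual x0"
  have "inner_op I \<phi> X - z < inner_op I (\<Sum>m=1..M. \<Phi> m) X - f \<Phi>" if "\<Phi> \<in> C" "\<phi> \<in> S" for \<Phi> \<phi>
  proof -
    have "(inner_op I \<phi> (residual x0) - gap * z) / gap
        < (inner_op I (\<Sum>m=1..M. \<Phi> m) (residual x0) - gap * f \<Phi>) / gap"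
      by (rule divide_strict_right_mono[OF sep[OF that] \<open>0 < gap\<close>])
    then show ?thesis using \<open>0 < gap\<close> by (simp add: X_def inner_op_scaleR_right diff_divide_distrib)
  qed
  moreover have "Her I X" unfolding X_def by (rule Her_scaleR[OF Her_residual[OF x0]])
  ultimately show ?thesis using that by blast
qed

lemma exists_dual_feasible_le:
  assumes "\<Phi>0 \<in> feasible" "\<forall>\<Phi>\<in>feasible. f \<Phi> < z"
  shows "\<exists>X\<in>dual_feasible. \<forall>\<phi>\<in>S. inner_op I \<phi> X \<le> z"
proof -
  obtain X where "Her I X"
    and sep: "\<And>\<Phi> \<phi>. \<Phi> \<in> C \<Longrightarrow> \<phi> \<in> S \<Longrightarrow> inner_op I \<phi> X - z < inner_op I (\<Sum>m=1..M. \<Phi> m) X - f \<Phi>"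
    using exists_strictly_separating[OF assms] by blast
  have \<Phi>0: "\<Phi>0 \<in> C" "(\<Sum>m=1..M. \<Phi>0 m) \<in> S" using assms(1) by (auto simp: feasible_def)
  have homogeneous: "inner_op I (\<Sum>m=1..M. (c *\<^sub>R \<Phi>) m) X - f (c *\<^sub>R \<Phi>)
      = c * (inner_op I (\<Sum>m=1..M. \<Phi> m) X - f \<Phi>)" for c \<Phi>
    using linear_f
    by (simp add: scaleR_sum_right[symmetric] inner_op_scaleR_left linear_scale right_diff_distrib)
  note separation = cone_separation[OF cone_C \<Phi>0, where a = "\<lambda>\<Phi>. inner_op I (\<Sum>m=1..M. \<Phi> m) X - f \<Phi>"
      and b = "\<lambda>\<phi>. inner_op I \<phi> X - z", OF homogeneous sep]
  have "X \<in> dual_feasible"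
    using separation(2) \<open>Her I X\<close> by (simp add: dual_feasible_def)
  moreover have "\<forall>\<phi>\<in>S. inner_op I \<phi> X \<le> z"
    using separation(1) by fastforce
  ultimately show ?thesis by blast
qed

theorem strong_duality:
  assumes "feasible \<noteq> {}"
  shows "(SUP \<Phi>\<in>feasible. ereal (f \<Phi>)) = (INF X\<in>dual_feasible. ereal (DS I S X))"
proof (rule antisym)
  show "(SUP \<Phi>\<in>feasible. ereal (f \<Phi>)) \<le> (INF X\<in>dual_feasible. ereal (DS I S X))"
    by (intro SUP_least INF_greatest) (simp add: weak_duality)
  obtain \<Phi>0 where \<Phi>0: "\<Phi>0 \<in> feasible" using assms by blast
  show "(INF X\<in>dual_feasible. ereal (DS I S X)) \<le> (SUP \<Phi>\<in>feasible. ereal (f \<Phi>))"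
  proof (cases "SUP \<Phi>\<in>feasible. ereal (f \<Phi>)")
    case (real v)
    have "(INF X\<in>dual_feasible. ereal (DS I S X)) \<le> ereal v + ereal e" if "0 < e" for e
    proof -
      have "f \<Phi> < v + e" if "\<Phi> \<in> feasible" for \<Phi>
        using SUP_upper[OF that, of "\<lambda>\<Phi>. ereal (f \<Phi>)"] real \<open>0 < e\<close> by simp
      then obtain X where X: "X \<in> dual_feasible" and le: "\<forall>\<phi>\<in>S. inner_op I \<phi> X \<le> v + e"
        using exists_dual_feasible_le[OF \<Phi>0] by blast
      have "S \<noteq> {}" using \<Phi>0 by (auto simp: feasible_def)
      then have "DS I S X \<le> v + e" unfolding DS_def using le by (intro cSup_least) auto
      then have "ereal (DS I S X) \<le> ereal v + ereal e" by simp
      with INF_lower[OF X, of "\<lambda>X. ereal (DS I S X)"] show ?thesis by (rule order_trans)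
    qed
    then show ?thesis unfolding real by (rule ereal_le_epsilon2)
  next
    case MInf
    then show ?thesis using SUP_upper[OF \<Phi>0, of "\<lambda>\<Phi>. ereal (f \<Phi>)"] by simp
  qed simp
qed

end

section \<open>Testers\<close>

lemma linear_Pobj: "linear (Pobj M I p E)"
proof (rule linearI)
  show "Pobj M I p E (\<Phi> + \<Psi>) = Pobj M I p E \<Phi> + Pobj M I p E \<Psi>" for \<Phi> \<Psi>
    by (simp only: Pobj_def plus_fun_apply inner_op_add_left distrib_left sum.distrib)
  show "Pobj M I p E (c *\<^sub>R \<Phi>) = c *\<^sub>R Pobj M I p E \<Phi>" for c \<Phi>
    by (simp add: Pobj_def inner_op_scaleR_left sum_distrib_left algebra_simps)
qed

lemma continuous_Pobj: "continuous_on UNIV (Pobj M I p E)"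
  unfolding Pobj_def[abs_def]
  by (intro continuous_on_sum continuous_on_mult continuous_on_const continuous_on_inner_op
      continuous_on_product_coordinates)

lemma sum_inner_op_diff_objective:
  "(\<Sum>m=1..M. inner_op I (\<Phi> m) (X - p m *\<^sub>R E m)) = inner_op I (\<Sum>m=1..M. \<Phi> m) X - Pobj M I p E \<Phi>"
  by (simp add: inner_op_diff_right inner_op_scaleR_right inner_op_sum_left sum_subtractf Pobj_def)

lemma conic_program_testers:
  assumes "1 \<le> T"
    and "closed \<C>" "convex \<C>" "cone \<C>" "\<C> \<subseteq> CG M T dW dV"
    and "closed \<S>" "convex \<S>" "\<S> \<subseteq> SG T dW dV"
  shows "conic_program (Lev dW dV T) M \<C> \<S> (Pobj M (Lev dW dV T) p E) (\<Prod>s\<in>{1..T}. dW s)"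
proof (rule conic_program.intro)
  show "Re (trace (Lev dW dV T) \<phi>) \<le> real (\<Prod>s\<in>{1..T}. dW s)" if "\<phi> \<in> \<S>" for \<phi>
    using trace_CombDual[of \<phi> T dW dV] that assms(1,8) by (auto simp: SG_def simp del: of_nat_prod)
  show "linear (Pobj M (Lev dW dV T) p E)" by (rule linear_Pobj)
  show "continuous_on UNIV (Pobj M (Lev dW dV T) p E)" by (rule continuous_Pobj)
qed (use assms in \<open>auto simp: finite_Lev CG_def SG_def CombDual_def\<close>)

theorem theorem1:
  fixes T M :: nat and dV dW :: "nat \<Rightarrow> nat"
    and E :: "nat \<Rightarrow> op" and p :: "nat \<Rightarrow> real"
    and \<P> \<C> :: "(nat \<Rightarrow> op) set" and \<S> :: "op set"
  assumes "T \<ge> 1"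
    and "\<forall>t\<in>{1..T}. dV t \<ge> 1 \<and> dW t \<ge> 1"
    and "M \<ge> 1"
    and "\<forall>m\<in>{1..M}. E m \<in> Comb T dW dV"
    and "\<forall>m\<in>{1..M}. p m \<ge> 0" and "(\<Sum>m=1..M. p m) = 1"
    and "\<P> \<noteq> {}" and "\<P> \<subseteq> PG M T dW dV"
    and "closed \<C>" and "convex \<C>" and "cone \<C>" and "\<C> \<subseteq> CG M T dW dV"
    and "closed \<S>" and "convex \<S>" and "\<S> \<subseteq> SG T dW dV"
    and "closure (convex hull \<P>) = {\<Phi> \<in> \<C>. (\<Sum>m=1..M. \<Phi> m) \<in> \<S>}"
  shows "(SUP \<Phi>\<in>\<P>. ereal (Pobj M (Lev dW dV T) p E \<Phi>)) =
         (INF X\<in>DC M (Lev dW dV T) p E \<C>. ereal (DS (Lev dW dV T) \<S> X))"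
proof -
  interpret conic_program "Lev dW dV T" M \<C> \<S> "Pobj M (Lev dW dV T) p E" "\<Prod>s\<in>{1..T}. dW s"
    using conic_program_testers assms(1,9-15) .
  have hull_eq: "closure (convex hull \<P>) = feasible"
    using assms(16) by (simp add: feasible_def)
  have "DC M (Lev dW dV T) p E \<C> = dual_feasible"
    unfolding DC_def dual_feasible_def sum_inner_op_diff_objective by auto
  moreover have "feasible \<noteq> {}"
    using assms(7) closure_subset hull_subset hull_eq by fastforce
  ultimately show ?thesis
    using strong_duality SUP_closure_convex_hull[OF linear_Pobj continuous_Pobj, where P = \<P>] hull_eq
    by simp
qed

end
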